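(* Let $d\ge1$, let $P$ be a complex polynomial of degree $d$ and $Z\subset D_1$. Then $$\sup_{D_1}|P|\le K_d(Z)\sup_Z|P|,\qquad K_d(Z)=\inf_{\alpha>0}\Big(\frac{6e^{1/\alpha}}{c_{d,\alpha}(Z)}\Big)^d$$ (with the convention that a term with $c_{d,\alpha}(Z)=0$ equals $+\infty$).
   Context: $D_r=\{z\in\mathbb C:|z|<r\}$. For $Z\subset D_1$, $d\in\mathbb N$ and $\alpha>0$, the $(d,\alpha)$-Cartan measure is $c_{d,\alpha}(Z)=\inf\{(\sum_{j=1}^q r_j^\alpha)^{1/\alpha}:\ Z\text{ is covered by } q\le d \text{ disks of radii } r_1,\dots,r_q>0\}$. *)

theory Defs
  imports "HOL-Analysis.Analysis" "HOL-Computational_Algebra.Polynomial" "HOL-Library.Extended_Real"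
begin

definition cartan_measure :: "nat \<Rightarrow> real \<Rightarrow> complex set \<Rightarrow> real" where
  "cartan_measure d \<alpha> Z = Inf {(\<Sum>j<q. r j powr \<alpha>) powr (1 / \<alpha>) | q r c.
      q \<le> d \<and> (\<forall>j<q. r j > 0) \<and> Z \<subseteq> (\<Union>j<q. ball (c j) (r j))}"

definition K_const :: "nat \<Rightarrow> complex set \<Rightarrow> ereal" where
  "K_const d Z = (INF \<alpha>\<in>{0<..}. (if cartan_measure d \<alpha> Z = 0 then \<infinity>
      else ereal ((6 * exp (1 / \<alpha>) / cartan_measure d \<alpha> Z) ^ d)))"

end

theory Submission
  imports Defs "HOL-Computational_Algebra.Fundamental_Theorem_Algebra"
begin

text \<open>
  Factor |P(w)| = |lead_coeff P| * prod |w - a| over the roots a of P. For w, z in the unit disk, a root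
  with |a| > 2 satisfies |w - a| \<le> 3 |z - a|, and a root with |a| \<le> 2 satisfies |w - a| \<le> 3.
  For the n roots of the second kind, Cartan's lemma gives at most n disks with
  (sum r_j^\<alpha>)^(1/\<alpha>) \<le> 2h off which prod |z - a| \<ge> (h / e^(1/\<alpha>))^n: the disks are chosen
  greedily around the most crowded spots, a disk swallowing k roots getting radius 2h (k/n)^(1/\<alpha>), so
  that a point outside all of them has fewer than k roots within h (k/n)^(1/\<alpha>) for every k, and the
  product is at least h^n (n!/n^n)^(1/\<alpha>). When 2h < c_{d,\<alpha>}(Z) the disks cannot cover Z, which
  yields z \<in> Z with |P(w)| \<le> (3 e^(1/\<alpha>) / h)^d |P(z)|; finally let h tend to c_{d,\<alpha>}(Z)/2.
\<close>

lemma power_div_fact_le_exp: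
  fixes x :: real
  assumes "0 \<le> x"
  shows "x ^ n / fact n \<le> exp x"
proof -
  have "(\<Sum>k\<in>{n}. x ^ k /\<^sub>R fact k) \<le> (\<Sum>k. x ^ k /\<^sub>R fact k)"
    using assms by (intro sum_le_suminf[OF sums_summable[OF exp_converges]]) auto
  then show ?thesis
    using sums_unique[OF exp_converges[of x]] by (simp add: divide_inverse mult.commute)
qed

lemma prod_mset_nonneg:
  fixes f :: "'a \<Rightarrow> 'b::linordered_semidom"
  shows "(\<And>x. x \<in># A \<Longrightarrow> 0 \<le> f x) \<Longrightarrow> 0 \<le> (\<Prod>a\<in>#A. f a)"
  by (induction A) auto

lemma prod_mset_mono:
  fixes f g :: "'a \<Rightarrow> 'b::linordered_semidom"
  shows "(\<And>x. x \<in># A \<Longrightarrow> 0 \<le> f x \<and> f x \<le> g x) \<Longrightarrow> (\<Prod>a\<in>#A. f a) \<le> (\<Prod>a\<in>#A. g a)"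
proof (induction A)
  case (add x A)
  then show ?case
    by (auto intro!: mult_mono prod_mset_nonneg order_trans[of 0 "f _" "g _"])
qed simp

lemma norm_prod_mset:
  fixes f :: "'a \<Rightarrow> 'b::real_normed_field"
  shows "norm (\<Prod>a\<in>#A. f a) = (\<Prod>a\<in>#A. norm (f a))"
  by (induction A) (auto simp: norm_mult)

lemma norm_poly_eq_prod_roots:
  fixes P :: "complex poly"
  shows "norm (poly P x) = norm (lead_coeff P) * (\<Prod>a\<in>#proots P. norm (x - a))"
proof -
  have "poly P x = lead_coeff P * (\<Prod>a\<in>#proots P. x - a)"
    by (subst complex_poly_decompose_multiset[symmetric]) (simp add: poly_prod_mset)
  then show ?thesis
    by (simp add: norm_mult norm_prod_mset)
qed

lemma largest_crowded_ball:
  fixes \<rho> :: "nat \<Rightarrow> real" and A :: "'a::metric_space multiset"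
  assumes "A \<noteq> {#}" and "\<And>k. 0 \<le> \<rho> k"
  obtains k c where "1 \<le> k" "k \<le> size {#a \<in># A. dist c a \<le> \<rho> k#}"
    "\<And>k' z. 1 \<le> k' \<Longrightarrow> k' \<le> size {#a \<in># A. dist z a < \<rho> k'#} \<Longrightarrow> k' \<le> k"
proof -
  define S where "S = {k. 1 \<le> k \<and> k \<le> size A \<and> (\<exists>c. k \<le> size {#a \<in># A. dist c a \<le> \<rho> k#})}"
  have "finite S"
    unfolding S_def by (rule finite_subset[of _ "{..size A}"]) auto
  have size_ge_1: "1 \<le> size M" if "x \<in># M" for x and M :: "'a multiset"
    using that by (cases M) auto
  obtain a where a: "a \<in># A"
    using assms(1) by blast
  then have "a \<in># {#b \<in># A. dist a b \<le> \<rho> 1#}"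
    using assms(2) by simp
  then have "1 \<le> size {#b \<in># A. dist a b \<le> \<rho> 1#}"
    by (rule size_ge_1)
  moreover have "1 \<le> size A"
    using a by (rule size_ge_1)
  ultimately have "1 \<in> S"
    unfolding S_def by blast
  then have "Max S \<in> S"
    using \<open>finite S\<close> by (intro Max_in) auto
  then obtain c where "1 \<le> Max S" "Max S \<le> size {#a \<in># A. dist c a \<le> \<rho> (Max S)#}"
    unfolding S_def by blast
  moreover have "k' \<le> Max S" if "1 \<le> k'" "k' \<le> size {#a \<in># A. dist z a < \<rho> k'#}" for k' z
  proof -
    have "size {#a \<in># A. dist z a < \<rho> k'#} \<le> size {#a \<in># A. dist z a \<le> \<rho> k'#}"
      by (intro size_mset_mono filter_mset_mono_strong) auto
    then have "k' \<le> size {#a \<in># A. dist z a \<le> \<rho> k'#}"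
      using that(2) by linarith
    moreover have "k' \<le> size A"
      using that(2) size_filter_mset_lesseq le_trans by blast
    ultimately have "k' \<in> S"
      unfolding S_def using that(1) by blast
    then show ?thesis
      using \<open>finite S\<close> by simp
  qed
  ultimately show thesis
    using that by blast
qed

lemma greedy_disk_cover:
  fixes \<rho> :: "nat \<Rightarrow> real" and A :: "'a::metric_space multiset"
  assumes "mono \<rho>" and "\<And>k. 0 \<le> \<rho> k"
  shows "\<exists>L. sum_list (map snd L) = size A \<and> (\<forall>p\<in>set L. 1 \<le> snd p) \<and>
    (\<forall>z k. 1 \<le> k \<longrightarrow> k \<le> size {#a \<in># A. dist z a < \<rho> k#} \<longrightarrow>
       (\<exists>p\<in>set L. k \<le> snd p \<and> dist z (fst p) < 2 * \<rho> (snd p)))"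
proof (induction "size A" arbitrary: A rule: less_induct)
  case less
  show ?case
  proof (cases "A = {#}")
    case True
    then show ?thesis
      by (intro exI[of _ "[]"]) auto
  next
    case False
    obtain k1 c1 where k1: "1 \<le> k1" and c1: "k1 \<le> size {#a \<in># A. dist c1 a \<le> \<rho> k1#}"
      and k1_max: "\<And>k z. 1 \<le> k \<Longrightarrow> k \<le> size {#a \<in># A. dist z a < \<rho> k#} \<Longrightarrow> k \<le> k1"
      by (rule largest_crowded_ball[of A \<rho>, OF False assms(2)]) blast
    define B where "B = {#a \<in># A. dist c1 a \<le> \<rho> k1#}"
    define A' where "A' = {#a \<in># A. \<not> dist c1 a \<le> \<rho> k1#}"
    have AB: "A = B + A'"
      unfolding A'_def B_def by simp
    have "k1 \<le> size B"
      using c1 B_def by simp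
    then have "size A' < size A"
      using AB k1 by simp
    then obtain L where L_sum: "sum_list (map snd L) = size A'" and L_pos: "\<forall>p\<in>set L. 1 \<le> snd p"
      and L_cover: "\<forall>z k. 1 \<le> k \<longrightarrow> k \<le> size {#a \<in># A'. dist z a < \<rho> k#} \<longrightarrow>
        (\<exists>p\<in>set L. k \<le> snd p \<and> dist z (fst p) < 2 * \<rho> (snd p))"
      using less.hyps by blast
    have "\<exists>p\<in>set ((c1, size B) # L). k \<le> snd p \<and> dist z (fst p) < 2 * \<rho> (snd p)"
      if "1 \<le> k" "k \<le> size {#a \<in># A. dist z a < \<rho> k#}" for z k
    proof (cases "k \<le> size {#a \<in># A'. dist z a < \<rho> k#}")
      case True
      then show ?thesis
        using L_cover that(1) by auto
    next
      case False
      have "k \<le> k1"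
        using k1_max that by blast
      have "size {#a \<in># A. dist z a < \<rho> k#}
          = size {#a \<in># B. dist z a < \<rho> k#} + size {#a \<in># A'. dist z a < \<rho> k#}"
        unfolding AB by simp
      then have "size {#a \<in># B. dist z a < \<rho> k#} \<noteq> 0"
        using that(2) False by linarith
      then obtain p where "p \<in># {#a \<in># B. dist z a < \<rho> k#}"
        by (metis multiset_nonemptyE size_empty)
      then have "p \<in># B" "dist z p < \<rho> k"
        by simp_all
      moreover have "dist c1 p \<le> \<rho> k1"
        using \<open>p \<in># B\<close> by (simp add: B_def)
      moreover have "\<rho> k \<le> \<rho> k1" "\<rho> k1 \<le> \<rho> (size B)"
        using assms(1) \<open>k \<le> k1\<close> \<open>k1 \<le> size B\<close> by (auto dest: monoD)
      ultimately have "dist z c1 < 2 * \<rho> (size B)"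
        using dist_triangle2[of z c1 p] by linarith
      then show ?thesis
        using \<open>k \<le> k1\<close> \<open>k1 \<le> size B\<close> by auto
    qed
    then show ?thesis
      using L_sum L_pos AB k1 \<open>k1 \<le> size B\<close>
      by (intro exI[of _ "(c1, size B) # L"]) auto
  qed
qed

lemma prod_dist_ge_prod_radii:
  fixes \<rho> :: "nat \<Rightarrow> real" and A :: "'a::metric_space multiset"
  assumes "\<And>k. 0 \<le> \<rho> k"
    and "\<And>k. 1 \<le> k \<Longrightarrow> size {#a \<in># A. dist z a < \<rho> k#} < k"
  shows "(\<Prod>k=1..size A. \<rho> k) \<le> (\<Prod>a\<in>#A. dist z a)"
  using assms(2)
proof (induction "size A" arbitrary: A)
  case 0
  then show ?case by simp
next
  case (Suc n)
  have "size {#a \<in># A. dist z a < \<rho> (Suc n)#} < size A"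
    using Suc.prems[of "Suc n"] Suc.hyps(2) by simp
  then have "{#a \<in># A. \<not> dist z a < \<rho> (Suc n)#} \<noteq> {#}"
    by (metis add.right_neutral less_irrefl multiset_partition size_union)
  then obtain a where a: "a \<in># A" "\<rho> (Suc n) \<le> dist z a"
    by auto
  define A' where "A' = A - {#a#}"
  have A: "A = add_mset a A'"
    using a(1) A'_def by simp
  have "size {#b \<in># A'. dist z b < \<rho> k#} < k" if "1 \<le> k" for k
  proof -
    have "size {#b \<in># A'. dist z b < \<rho> k#} \<le> size {#b \<in># A. dist z b < \<rho> k#}"
      unfolding A by (intro size_mset_mono multiset_filter_mono) auto
    then show ?thesis
      using Suc.prems[OF that] by linarith
  qed
  then have IH: "(\<Prod>k=1..n. \<rho> k) \<le> (\<Prod>b\<in>#A'. dist z b)"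
    using Suc.hyps A by simp
  have "(\<Prod>k=1..size A. \<rho> k) = \<rho> (Suc n) * (\<Prod>k=1..n. \<rho> k)"
    using Suc.hyps(2)[symmetric] by (simp add: prod.cl_ivl_Suc mult.commute)
  also have "\<dots> \<le> dist z a * (\<Prod>b\<in>#A'. dist z b)"
    using a(2) IH assms(1) by (intro mult_mono prod_nonneg prod_mset_nonneg) auto
  also have "\<dots> = (\<Prod>b\<in>#A. dist z b)"
    unfolding A by simp
  finally show ?case .
qed

definition cartan_radius :: "real \<Rightarrow> real \<Rightarrow> nat \<Rightarrow> nat \<Rightarrow> real" where
  "cartan_radius h \<alpha> n k = h * (real k / real n) powr (1 / \<alpha>)"

lemma cartan_radius_nonneg: "0 \<le> h \<Longrightarrow> 0 \<le> cartan_radius h \<alpha> n k"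
  by (simp add: cartan_radius_def)

lemma cartan_radius_pos: "0 < h \<Longrightarrow> 1 \<le> k \<Longrightarrow> k \<le> n \<Longrightarrow> 0 < cartan_radius h \<alpha> n k"
  by (simp add: cartan_radius_def)

lemma mono_cartan_radius: "0 \<le> h \<Longrightarrow> 0 < \<alpha> \<Longrightarrow> mono (cartan_radius h \<alpha> n)"
  unfolding cartan_radius_def
  by (intro monoI mult_left_mono powr_mono2 divide_right_mono) auto

lemma powr_cartan_radius:
  assumes "0 \<le> h" "0 < \<alpha>"
  shows "cartan_radius h \<alpha> n k powr \<alpha> = h powr \<alpha> * (real k / real n)"
  using assms by (simp add: cartan_radius_def powr_mult powr_powr)

lemma prod_cartan_radius_ge:
  assumes "0 < h" "0 < \<alpha>"
  shows "(h / exp (1 / \<alpha>)) ^ n \<le> (\<Prod>k=1..n. cartan_radius h \<alpha> n k)"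
proof (cases "n = 0")
  case False
  have "real n ^ n / fact n \<le> exp (real n)"
    by (rule power_div_fact_le_exp) simp
  then have "exp (- real n) \<le> fact n / real n ^ n"
    using False by (simp add: exp_minus field_simps)
  then have "exp (- real n) powr (1 / \<alpha>) \<le> (fact n / real n ^ n) powr (1 / \<alpha>)"
    using assms(2) by (intro powr_mono2) auto
  moreover have "exp (- real n) powr (1 / \<alpha>) = (1 / exp (1 / \<alpha>)) ^ n"
  proof -
    have "exp (- real n) powr (1 / \<alpha>) = exp (real n * - (1 / \<alpha>))"
      by (simp add: exp_powr_real)
    also have "\<dots> = exp (- (1 / \<alpha>)) ^ n"
      by (rule exp_of_nat_mult)
    finally show ?thesis
      by (simp add: exp_minus inverse_eq_divide)
  qed
  ultimately have "h ^ n * (1 / exp (1 / \<alpha>)) ^ n \<le> h ^ n * (fact n / real n ^ n) powr (1 / \<alpha>)"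
    using assms(1) by (intro mult_left_mono) auto
  then have "(h / exp (1 / \<alpha>)) ^ n \<le> h ^ n * (fact n / real n ^ n) powr (1 / \<alpha>)"
    by (simp add: power_divide)
  also have "fact n / real n ^ n = (\<Prod>k=1..n. real k / real n)"
    by (simp add: prod_dividef fact_prod)
  also have "h ^ n * (\<Prod>k=1..n. real k / real n) powr (1 / \<alpha>) = (\<Prod>k=1..n. cartan_radius h \<alpha> n k)"
    by (simp add: cartan_radius_def prod.distrib prod_powr_distrib)
  finally show ?thesis .
qed simp

lemma sum_powr_cartan_radius_le:
  assumes "0 \<le> h" "0 < \<alpha>" "sum_list (map snd L) = n"
  shows "(\<Sum>j<length L. cartan_radius h \<alpha> n (snd (L ! j)) powr \<alpha>) \<le> h powr \<alpha>"
proof -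
  have "(\<Sum>j<length L. cartan_radius h \<alpha> n (snd (L ! j)) powr \<alpha>)
      = (\<Sum>j<length L. h powr \<alpha> * (real (snd (L ! j)) / real n))"
    using assms(1,2) by (simp only: powr_cartan_radius)
  also have "\<dots> = h powr \<alpha> * ((\<Sum>j<length L. real (snd (L ! j))) / real n)"
    by (simp only: sum_distrib_left sum_divide_distrib)
  also have "(\<Sum>j<length L. real (snd (L ! j))) = real n"
    using assms(3) by (simp add: sum_list_sum_nth atLeast0LessThan flip: of_nat_sum)
  finally show ?thesis
    by (cases "n = 0") auto
qed

lemma cartan_lemma:
  fixes A :: "'a::metric_space multiset"
  assumes "0 < h" "0 < \<alpha>"
  obtains q c r where "q \<le> size A" "\<forall>j<q. 0 < r j" "(\<Sum>j<q. r j powr \<alpha>) powr (1 / \<alpha>) \<le> 2 * h"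
    "\<And>z. z \<notin> (\<Union>j<q. ball (c j) (r j)) \<Longrightarrow> (h / exp (1 / \<alpha>)) ^ size A \<le> (\<Prod>a\<in>#A. dist z a)"
proof -
  define n where "n = size A"
  define \<rho> where "\<rho> = cartan_radius h \<alpha> n"
  obtain L where L_sum: "sum_list (map snd L) = n" and L_pos: "\<forall>p\<in>set L. 1 \<le> snd p"
    and L_cover: "\<forall>z k. 1 \<le> k \<longrightarrow> k \<le> size {#a \<in># A. dist z a < \<rho> k#} \<longrightarrow>
        (\<exists>p\<in>set L. k \<le> snd p \<and> dist z (fst p) < 2 * \<rho> (snd p))"
    using greedy_disk_cover[of \<rho> A] assms unfolding \<rho>_def n_def
    by (auto simp: mono_cartan_radius cartan_radius_nonneg)
  define q where "q = length L"
  define c where "c j = fst (L ! j)" for j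
  define r where "r j = cartan_radius (2 * h) \<alpha> n (snd (L ! j))" for j
  have "q \<le> n"
    using L_pos L_sum unfolding q_def by (induction L arbitrary: n) fastforce+
  moreover have "\<forall>j<q. 0 < r j"
  proof (intro allI impI)
    fix j assume "j < q"
    then have "L ! j \<in> set L"
      unfolding q_def by simp
    then have "1 \<le> snd (L ! j)" "snd (L ! j) \<le> n"
      using L_pos L_sum member_le_sum_list[of "snd (L ! j)" "map snd L"] by auto
    then show "0 < r j"
      unfolding r_def using assms(1) by (intro cartan_radius_pos) auto
  qed
  moreover have "(\<Sum>j<q. r j powr \<alpha>) powr (1 / \<alpha>) \<le> 2 * h"
  proof -
    have "(\<Sum>j<q. r j powr \<alpha>) \<le> (2 * h) powr \<alpha>"
      unfolding q_def r_def using assms L_sum by (intro sum_powr_cartan_radius_le) auto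
    then have "(\<Sum>j<q. r j powr \<alpha>) powr (1 / \<alpha>) \<le> ((2 * h) powr \<alpha>) powr (1 / \<alpha>)"
      using assms(2) by (intro powr_mono2) (auto intro: sum_nonneg)
    then show ?thesis
      using assms by (simp add: powr_powr)
  qed
  moreover have "(h / exp (1 / \<alpha>)) ^ n \<le> (\<Prod>a\<in>#A. dist z a)"
    if "z \<notin> (\<Union>j<q. ball (c j) (r j))" for z
  proof -
    have "size {#a \<in># A. dist z a < \<rho> k#} < k" if "1 \<le> k" for k
    proof (rule ccontr)
      assume "\<not> size {#a \<in># A. dist z a < \<rho> k#} < k"
      then obtain p where "p \<in> set L" "dist z (fst p) < 2 * \<rho> (snd p)"
        using L_cover \<open>1 \<le> k\<close> by (meson not_less)
      moreover have "2 * \<rho> k' = cartan_radius (2 * h) \<alpha> n k'" for k'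
        by (simp add: \<rho>_def cartan_radius_def)
      ultimately obtain j where "j < q" "dist z (c j) < r j"
        unfolding q_def c_def r_def by (metis in_set_conv_nth)
      then show False
        using \<open>z \<notin> (\<Union>j<q. ball (c j) (r j))\<close> by (auto simp: dist_commute)
    qed
    then have "(\<Prod>k=1..n. \<rho> k) \<le> (\<Prod>a\<in>#A. dist z a)"
      unfolding n_def using assms(1) by (intro prod_dist_ge_prod_radii) (auto simp: \<rho>_def cartan_radius_nonneg)
    then show ?thesis
      using prod_cartan_radius_ge[OF assms] unfolding \<rho>_def by (meson order_trans)
  qed
  ultimately show thesis
    using that unfolding n_def by blast
qed

lemma cartan_measure_le_cover:
  assumes "q \<le> d" "\<forall>j<q. 0 < r j" "Z \<subseteq> (\<Union>j<q. ball (c j) (r j))"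
  shows "cartan_measure d \<alpha> Z \<le> (\<Sum>j<q. r j powr \<alpha>) powr (1 / \<alpha>)"
  unfolding cartan_measure_def using assms
  by (intro cInf_lower bdd_belowI[of _ 0]) auto

lemma cartan_measure_nonneg:
  assumes "1 \<le> d" "bounded Z"
  shows "0 \<le> cartan_measure d \<alpha> Z"
proof -
  obtain R where "0 < R" "Z \<subseteq> ball 0 R"
    using bounded_subset_ballD[OF assms(2)] by blast
  then have "(R powr \<alpha>) powr (1 / \<alpha>) \<in> {(\<Sum>j<q. r j powr \<alpha>) powr (1 / \<alpha>) | q r c.
      q \<le> d \<and> (\<forall>j<q. 0 < r j) \<and> Z \<subseteq> (\<Union>j<q. ball (c j) (r j))}"
    using assms(1) by (intro CollectI exI[of _ 1] exI[of _ "\<lambda>_. R"] exI[of _ "\<lambda>_. 0"]) auto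
  then show ?thesis
    unfolding cartan_measure_def by (intro cInf_greatest) auto
qed

lemma cartan_measure_le_radius:
  assumes "1 \<le> d" "0 < \<alpha>" "0 < R" "Z \<subseteq> ball c R"
  shows "cartan_measure d \<alpha> Z \<le> R"
proof -
  have "Z \<subseteq> (\<Union>j::nat<1. ball c R)"
    using assms(4) by (auto simp: lessThan_Suc)
  then show ?thesis
    using cartan_measure_le_cover[of 1 d "\<lambda>_. R" Z "\<lambda>_. c" \<alpha>] assms(1-3) by (simp add: powr_powr)
qed

lemma cartan_measure_empty: "cartan_measure d \<alpha> {} = 0"
  unfolding cartan_measure_def
proof (rule cInf_eq_minimum)
  show "0 \<in> {(\<Sum>j<q. r j powr \<alpha>) powr (1 / \<alpha>) | q r c.
      q \<le> d \<and> (\<forall>j<q. 0 < r j) \<and> {} \<subseteq> (\<Union>j<q. ball (c j) (r j))}"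
    by (intro CollectI exI[of _ 0]) simp
qed (elim CollectE exE conjE, hypsubst, rule powr_ge_zero)

lemma exists_point_with_large_prod_dist:
  fixes A :: "complex multiset"
  assumes "size A \<le> d" "0 < \<alpha>" "0 < h" "2 * h < cartan_measure d \<alpha> Z"
  shows "\<exists>z\<in>Z. (h / exp (1 / \<alpha>)) ^ size A \<le> (\<Prod>a\<in>#A. dist z a)"
proof -
  obtain q c r where q: "q \<le> size A" and r: "\<forall>j<q. 0 < r j"
    and r_sum: "(\<Sum>j<q. r j powr \<alpha>) powr (1 / \<alpha>) \<le> 2 * h"
    and far: "\<And>z. z \<notin> (\<Union>j<q. ball (c j) (r j)) \<Longrightarrow> (h / exp (1 / \<alpha>)) ^ size A \<le> (\<Prod>a\<in>#A. dist z a)"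
    by (rule cartan_lemma[OF assms(3,2), of A]) blast
  have "\<not> Z \<subseteq> (\<Union>j<q. ball (c j) (r j))"
  proof
    assume "Z \<subseteq> (\<Union>j<q. ball (c j) (r j))"
    then have "cartan_measure d \<alpha> Z \<le> (\<Sum>j<q. r j powr \<alpha>) powr (1 / \<alpha>)"
      using q r assms(1) by (intro cartan_measure_le_cover) auto
    then show False
      using r_sum assms(4) by linarith
  qed
  then show ?thesis
    using far by blast
qed

lemma norm_diff_le_three_times:
  fixes w z a :: "'a::real_normed_vector"
  assumes "norm w < 1" "norm z < 1" "2 < norm a"
  shows "norm (w - a) \<le> 3 * norm (z - a)"
proof -
  have "norm a - norm z \<le> norm (z - a)"
    using norm_triangle_ineq2[of a z] by (simp add: norm_minus_commute)
  then show ?thesis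
    using norm_triangle_ineq4[of w a] assms by linarith
qed

lemma norm_poly_le_far_roots_part:
  fixes P :: "complex poly"
  assumes "norm w < 1" "norm z < 1"
  shows "norm (poly P w)
    \<le> 3 ^ degree P * (norm (lead_coeff P) * (\<Prod>a\<in>#{#a \<in># proots P. 2 < norm a#}. norm (z - a)))"
proof -
  define N where "N = {#a \<in># proots P. norm a \<le> 2#}"
  define F where "F = {#a \<in># proots P. 2 < norm a#}"
  have roots: "proots P = N + F"
    using multiset_partition[of "proots P" "\<lambda>a. norm a \<le> 2"] by (simp add: N_def F_def not_le)
  have "(\<Prod>a\<in>#N. norm (w - a)) \<le> (\<Prod>a\<in>#N. 3)"
  proof (rule prod_mset_mono)
    fix a assume "a \<in># N"
    then show "0 \<le> norm (w - a) \<and> norm (w - a) \<le> 3"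
      using assms(1) norm_triangle_ineq4[of w a] by (simp add: N_def)
  qed
  moreover have "(\<Prod>a\<in>#F. norm (w - a)) \<le> (\<Prod>a\<in>#F. 3 * norm (z - a))"
    using assms by (intro prod_mset_mono) (auto simp: F_def norm_diff_le_three_times)
  ultimately have "norm (poly P w)
      \<le> norm (lead_coeff P) * (3 ^ size N * (3 ^ size F * (\<Prod>a\<in>#F. norm (z - a))))"
    unfolding norm_poly_eq_prod_roots roots
    by (auto simp: prod_mset.distrib intro!: mult_left_mono mult_mono prod_mset_nonneg)
  also have "\<dots> = 3 ^ (size N + size F) * (norm (lead_coeff P) * (\<Prod>a\<in>#F. norm (z - a)))"
    by (simp add: power_add ac_simps)
  also have "size N + size F = degree P"
    using size_proots_complex[of P] unfolding roots by simp
  finally show ?thesis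
    unfolding F_def .
qed

lemma exists_point_bounding_poly:
  fixes P :: "complex poly"
  assumes "1 \<le> d" "degree P \<le> d" "Z \<subseteq> ball 0 1" "0 < \<alpha>" "0 < h"
    "2 * h < cartan_measure d \<alpha> Z" "norm w < 1"
  shows "\<exists>z\<in>Z. norm (poly P w) \<le> (3 * exp (1 / \<alpha>) / h) ^ d * norm (poly P z)"
proof -
  define E where "E = exp (1 / \<alpha>)"
  define N where "N = {#a \<in># proots P. norm a \<le> 2#}"
  define F where "F = {#a \<in># proots P. 2 < norm a#}"
  have roots: "proots P = N + F"
    using multiset_partition[of "proots P" "\<lambda>a. norm a \<le> 2"] by (simp add: N_def F_def not_le)
  have "size N \<le> d"
    using size_proots_complex[of P] assms(2) unfolding roots by simp
  then obtain z where "z \<in> Z" and z_far: "(h / E) ^ size N \<le> (\<Prod>a\<in>#N. dist z a)"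
    using exists_point_with_large_prod_dist[of N d \<alpha> h Z] assms(4-6) unfolding E_def by auto
  define PF where "PF = norm (lead_coeff P) * (\<Prod>a\<in>#F. norm (z - a))"
  have "PF \<ge> 0"
    unfolding PF_def by (simp add: prod_mset_nonneg)
  have "norm (poly P w) \<le> 3 ^ degree P * PF"
    using norm_poly_le_far_roots_part[OF assms(7), of z] assms(3) \<open>z \<in> Z\<close>
    unfolding PF_def F_def by auto
  also have "\<dots> \<le> 3 ^ d * PF"
    using assms(2) \<open>PF \<ge> 0\<close> by (intro mult_right_mono power_increasing) auto
  finally have w_bound: "norm (poly P w) \<le> 3 ^ d * PF" .
  have "1 \<le> E"
    using assms(4) by (simp add: E_def)
  then have "h \<le> E"
    using cartan_measure_le_radius[OF assms(1,4) _ assms(3)] assms(6) by simp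
  then have "(h / E) ^ d \<le> (h / E) ^ size N"
    using assms(5) \<open>size N \<le> d\<close> by (intro power_decreasing) auto
  also have "\<dots> \<le> (\<Prod>a\<in>#N. norm (z - a))"
    using z_far by (simp add: dist_norm)
  finally have "(h / E) ^ d * PF \<le> (\<Prod>a\<in>#N. norm (z - a)) * PF"
    using \<open>PF \<ge> 0\<close> by (rule mult_right_mono)
  also have "\<dots> = norm (poly P z)"
    unfolding norm_poly_eq_prod_roots roots PF_def by (simp add: ac_simps)
  finally have "(3 * E / h) ^ d * ((h / E) ^ d * PF) \<le> (3 * E / h) ^ d * norm (poly P z)"
    using assms(5) \<open>1 \<le> E\<close> by (intro mult_left_mono) auto
  moreover have "(3 * E / h) ^ d * ((h / E) ^ d * PF) = 3 ^ d * PF"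
  proof -
    have "(3 * E / h) * (h / E) = 3"
      using assms(5) \<open>1 \<le> E\<close> by simp
    then show ?thesis
      by (metis mult.assoc power_mult_distrib)
  qed
  ultimately show ?thesis
    using w_bound \<open>z \<in> Z\<close> unfolding E_def by (metis order_trans)
qed

lemma norm_poly_le_cartan_bound:
  fixes P :: "complex poly"
  assumes "1 \<le> d" "degree P \<le> d" "Z \<subseteq> ball 0 1" "0 < \<alpha>" "0 < cartan_measure d \<alpha> Z"
    and M: "\<And>z. z \<in> Z \<Longrightarrow> norm (poly P z) \<le> M" and "norm w < 1"
  shows "norm (poly P w) \<le> (6 * exp (1 / \<alpha>) / cartan_measure d \<alpha> Z) ^ d * M"
proof -
  define c where "c = cartan_measure d \<alpha> Z"
  define E where "E = exp (1 / \<alpha>)"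
  have "\<forall>\<^sub>F h in at_left (c / 2). h \<in> {0<..<c / 2}"
    using assms(5) unfolding c_def by (intro eventually_at_left_real) simp
  then have "\<forall>\<^sub>F h in at_left (c / 2). norm (poly P w) \<le> (3 * E / h) ^ d * M"
  proof (rule eventually_mono)
    fix h assume h: "h \<in> {0<..<c / 2}"
    then obtain z where "z \<in> Z" and "norm (poly P w) \<le> (3 * E / h) ^ d * norm (poly P z)"
      using exists_point_bounding_poly[OF assms(1-4), of h w] assms(7) unfolding c_def E_def by auto
    moreover have "(3 * E / h) ^ d * norm (poly P z) \<le> (3 * E / h) ^ d * M"
      using M[OF \<open>z \<in> Z\<close>] h by (intro mult_left_mono) (auto simp: E_def)
    ultimately show "norm (poly P w) \<le> (3 * E / h) ^ d * M"
      by linarith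
  qed
  moreover have "((\<lambda>h. (3 * E / h) ^ d * M) \<longlongrightarrow> (3 * E / (c / 2)) ^ d * M) (at_left (c / 2))"
    using assms(5) unfolding c_def by (intro tendsto_intros) auto
  ultimately have "norm (poly P w) \<le> (3 * E / (c / 2)) ^ d * M"
    by (intro tendsto_le[OF trivial_limit_at_left_real _ tendsto_const])
  then show ?thesis
    by (simp add: c_def E_def)
qed

lemma ereal_le_INF_mult:
  fixes f :: "'a \<Rightarrow> ereal"
  assumes "0 \<le> y" and some_finite: "\<exists>i\<in>I. f i < \<infinity>"
    and le: "\<And>i. i \<in> I \<Longrightarrow> f i < \<infinity> \<Longrightarrow> ereal x \<le> f i * ereal y"
  shows "ereal x \<le> (INF i\<in>I. f i) * ereal y"
proof (cases "y = 0")
  case True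
  then show ?thesis
    using some_finite le by (auto simp: zero_ereal_def[symmetric])
next
  case False
  with assms(1) have "0 < y"
    by simp
  have "ereal (x / y) \<le> f i" if "i \<in> I" for i
  proof (cases "f i")
    case (real r)
    then show ?thesis
      using le[OF that] \<open>0 < y\<close> by (simp add: pos_divide_le_eq)
  qed (use le[OF that] \<open>0 < y\<close> in auto)
  then have "ereal (x / y) * ereal y \<le> (INF i\<in>I. f i) * ereal y"
    by (intro ereal_mult_right_mono INF_greatest) (auto simp: assms(1))
  then show ?thesis
    using \<open>0 < y\<close> by simp
qed

lemma K_const_eq_infinity:
  assumes "\<And>\<alpha>. 0 < \<alpha> \<Longrightarrow> cartan_measure d \<alpha> Z = 0"
  shows "K_const d Z = \<infinity>"
proof -
  have "\<infinity> \<le> K_const d Z"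
    unfolding K_const_def using assms by (intro INF_greatest) simp
  then show ?thesis
    by simp
qed

lemma norm_poly_le_K_const:
  fixes P :: "complex poly"
  assumes "1 \<le> d" "degree P \<le> d" "Z \<subseteq> ball 0 1" "0 < \<alpha>\<^sub>0" "cartan_measure d \<alpha>\<^sub>0 Z \<noteq> 0"
    and "\<And>z. z \<in> Z \<Longrightarrow> norm (poly P z) \<le> y" "0 \<le> y" "norm w < 1"
  shows "ereal (norm (poly P w)) \<le> K_const d Z * ereal y"
  unfolding K_const_def
proof (rule ereal_le_INF_mult)
  show "\<exists>\<alpha>\<in>{0<..}. (if cartan_measure d \<alpha> Z = 0 then \<infinity>
      else ereal ((6 * exp (1 / \<alpha>) / cartan_measure d \<alpha> Z) ^ d)) < \<infinity>"
    using assms(4,5) by auto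
next
  fix \<alpha> :: real
  assume "\<alpha> \<in> {0<..}" "(if cartan_measure d \<alpha> Z = 0 then \<infinity>
      else ereal ((6 * exp (1 / \<alpha>) / cartan_measure d \<alpha> Z) ^ d)) < \<infinity>"
  moreover have "0 \<le> cartan_measure d \<alpha> Z"
    using assms(1,3) bounded_subset[OF bounded_ball] by (intro cartan_measure_nonneg) auto
  ultimately have "0 < \<alpha>" "0 < cartan_measure d \<alpha> Z"
    by (auto split: if_splits)
  then show "ereal (norm (poly P w)) \<le> (if cartan_measure d \<alpha> Z = 0 then \<infinity>
      else ereal ((6 * exp (1 / \<alpha>) / cartan_measure d \<alpha> Z) ^ d)) * ereal y"
    using norm_poly_le_cartan_bound[OF assms(1-3) _ _ assms(6) assms(8)] by simp
qed (rule assms(7))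

lemma SUP_norm_poly_eq_ereal:
  fixes P :: "complex poly"
  assumes "Z \<noteq> {}" "bounded Z"
  obtains y where "(SUP z\<in>Z. ereal (norm (poly P z))) = ereal y" "0 \<le> y"
proof -
  have "bounded (poly P ` closure Z)"
    using assms(2) by (intro compact_imp_bounded compact_continuous_image continuous_intros)
      (auto simp: compact_closure)
  then obtain M where "\<And>z. z \<in> Z \<Longrightarrow> norm (poly P z) \<le> M"
    using closure_subset by (force simp: bounded_iff)
  then have "ereal 0 \<le> (SUP z\<in>Z. ereal (norm (poly P z)))" "(SUP z\<in>Z. ereal (norm (poly P z))) \<le> ereal M"
    using assms(1) by (auto intro: SUP_upper2 SUP_least)
  then show thesis
    using that by (cases "SUP z\<in>Z. ereal (norm (poly P z))") auto
qed

theorem mainTheorem7: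
  fixes P :: "complex poly" and d :: nat and Z :: "complex set"
  assumes "d \<ge> 1" and "degree P = d" and "Z \<subseteq> ball 0 1"
  shows "K_const d Z = \<infinity> \<or>
    (SUP z\<in>ball 0 1. ereal (cmod (poly P z))) \<le> K_const d Z * (SUP z\<in>Z. ereal (cmod (poly P z)))"
proof (cases "\<exists>\<alpha>>0. cartan_measure d \<alpha> Z \<noteq> 0")
  case False
  then show ?thesis
    using K_const_eq_infinity by blast
next
  case True
  then obtain \<alpha>\<^sub>0 where \<alpha>\<^sub>0: "0 < \<alpha>\<^sub>0" "cartan_measure d \<alpha>\<^sub>0 Z \<noteq> 0"
    by blast
  then have "Z \<noteq> {}"
    using cartan_measure_empty by auto
  then obtain y where y: "(SUP z\<in>Z. ereal (norm (poly P z))) = ereal y" "0 \<le> y"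
    using SUP_norm_poly_eq_ereal bounded_subset[OF bounded_ball assms(3)] by blast
  then have "norm (poly P z) \<le> y" if "z \<in> Z" for z
    using SUP_upper[OF that, of "\<lambda>z. ereal (norm (poly P z))"] by simp
  then show ?thesis
    using norm_poly_le_K_const[OF assms(1) _ assms(3) \<alpha>\<^sub>0] assms(2) y
    by (auto intro!: SUP_least)
qed

end
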